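(* Let $P\in\Delta_{\mathcal{T},\mathcal{X},\mathcal{Y}}$, let $Q^*$ be a minimizer of $I_Q(T:X\mid Y)$ over $Q\in\Delta_P$, and let $(t,x,y)\in\operatorname{supp}(\Delta_P)$. If $Q^*(t,x,y)=0$, then $Q^*(X=x,Y=y)=0$; consequently $Q^*(t',x,y)=0$ for all $t'\in\mathcal{T}$.
   Context: $T,X,Y$ are random variables with finite state spaces $\mathcal{T},\mathcal{X},\mathcal{Y}$; $\Delta_{\mathcal{T},\mathcal{X},\mathcal{Y}}$ is the set of all joint distributions on $\mathcal{T}\times\mathcal{X}\times\mathcal{Y}$. For $P\in\Delta_{\mathcal{T},\mathcal{X},\mathcal{Y}}$, $\Delta_P=\{Q\in\Delta_{\mathcal{T},\mathcal{X},\mathcal{Y}}: Q(X=x,T=t)=P(X=x,T=t),\ Q(Y=y,T=t)=P(Y=y,T=t)\ \forall x,y,t\}$ and $\operatorname{supp}(\Delta_P)=\bigcup_{Q\in\Delta_P}\operatorname{supp}(Q)$. $I_Q(T:X\mid Y)$ is the conditional mutual information under $Q$. *)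

theory Defs
  imports "HOL-Analysis.Analysis"
begin

definition distr :: "('t::finite \<times> 'x::finite \<times> 'y::finite \<Rightarrow> real) set" where
  "distr = {Q. (\<forall>z. 0 \<le> Q z) \<and> (\<Sum>z\<in>UNIV. Q z) = 1}"

definition margXT :: "('t::finite \<times> 'x::finite \<times> 'y::finite \<Rightarrow> real) \<Rightarrow> 'x \<Rightarrow> 't \<Rightarrow> real" where
  "margXT Q x t = (\<Sum>y\<in>UNIV. Q (t, x, y))"

definition margYT :: "('t::finite \<times> 'x::finite \<times> 'y::finite \<Rightarrow> real) \<Rightarrow> 'y \<Rightarrow> 't \<Rightarrow> real" where
  "margYT Q y t = (\<Sum>x\<in>UNIV. Q (t, x, y))"

definition margXY :: "('t::finite \<times> 'x::finite \<times> 'y::finite \<Rightarrow> real) \<Rightarrow> 'x \<Rightarrow> 'y \<Rightarrow> real" where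
  "margXY Q x y = (\<Sum>t\<in>UNIV. Q (t, x, y))"

definition margY :: "('t::finite \<times> 'x::finite \<times> 'y::finite \<Rightarrow> real) \<Rightarrow> 'y \<Rightarrow> real" where
  "margY Q y = (\<Sum>t\<in>UNIV. \<Sum>x\<in>UNIV. Q (t, x, y))"

definition DeltaP :: "('t::finite \<times> 'x::finite \<times> 'y::finite \<Rightarrow> real) \<Rightarrow> ('t \<times> 'x \<times> 'y \<Rightarrow> real) set" where
  "DeltaP P = {Q \<in> distr. (\<forall>x t. margXT Q x t = margXT P x t) \<and> (\<forall>y t. margYT Q y t = margYT P y t)}"

definition suppDeltaP :: "('t::finite \<times> 'x::finite \<times> 'y::finite \<Rightarrow> real) \<Rightarrow> ('t \<times> 'x \<times> 'y) set" where
  "suppDeltaP P = (\<Union>Q\<in>DeltaP P. {z. Q z \<noteq> 0})"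

definition condMI :: "('t::finite \<times> 'x::finite \<times> 'y::finite \<Rightarrow> real) \<Rightarrow> real" where
  "condMI Q = (\<Sum>(t,x,y)\<in>UNIV.
      if Q (t,x,y) = 0 then 0
      else Q (t,x,y) * log 2 ((Q (t,x,y) * margY Q y) / (margYT Q y t * margXY Q x y)))"

end

theory Submission
  imports Defs
begin

text \<open>Writing \<open>I(T:X|Y) = H(T|Y) - H(T|X,Y)\<close>, the first term depends only on the
  \<open>(Y,T)\<close>-marginal and is therefore constant on \<open>\<Delta>\<^sub>P\<close>, so a minimiser \<open>Q\<^sup>*\<close>
  maximises \<open>H(T|X,Y)\<close>. Suppose \<open>Q\<^sup>*(x,y) > 0\<close> but \<open>Q\<^sup>*(t,x,y) = 0 < Q'(t,x,y)\<close>
  for some \<open>Q' \<in> \<Delta>\<^sub>P\<close>. Along the segment \<open>(1-e) Q\<^sup>* + e Q'\<close>, which stays in \<open>\<Delta>\<^sub>P\<close>,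
  concavity of entropy bounds the change of \<open>-H(T|X,Y)\<close> by \<open>O(e)\<close> in every
  \<open>(x',y')\<close>-block, except that in block \<open>(x,y)\<close> the newly charged point \<open>t\<close> contributes
  \<open>e Q'(t,x,y) log e\<close>. For small \<open>e\<close> this term dominates, contradicting minimality.\<close>

definition xlogx :: "real \<Rightarrow> real" where
  "xlogx u = u * log 2 u"

text \<open>\<open>neg_entropy v = -(\<Sum>v) \<cdot> H(v / \<Sum>v)\<close> for a non-negative vector \<open>v\<close>.\<close>
definition neg_entropy :: "('t::finite \<Rightarrow> real) \<Rightarrow> real" where
  "neg_entropy v = (\<Sum>t\<in>UNIV. xlogx (v t)) - xlogx (\<Sum>t\<in>UNIV. v t)"

text \<open>An upper bound for the one-sided derivative of \<open>neg_entropy\<close> at \<open>a\<close> towards \<open>b\<close>,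
  leaving out the \<open>e log e\<close> contributions of the points where \<open>a\<close> vanishes.\<close>
definition neg_entropy_slope :: "('t::finite \<Rightarrow> real) \<Rightarrow> ('t \<Rightarrow> real) \<Rightarrow> real" where
  "neg_entropy_slope a b =
    (if sum a UNIV = 0 then neg_entropy b
     else (\<Sum>t\<in>UNIV. xlogx (b t) - xlogx (a t))
          - (log 2 (sum a UNIV) + 1 / ln 2) * (sum b UNIV - sum a UNIV))"

definition neg_cond_entropy :: "('t::finite \<times> 'x::finite \<times> 'y::finite \<Rightarrow> real) \<Rightarrow> real" where
  "neg_cond_entropy Q = (\<Sum>x\<in>UNIV. \<Sum>y\<in>UNIV. neg_entropy (\<lambda>t. Q (t, x, y)))"

definition cond_entropy_marg :: "('y::finite \<Rightarrow> 't::finite \<Rightarrow> real) \<Rightarrow> real" where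
  "cond_entropy_marg m =
    (\<Sum>t\<in>UNIV. \<Sum>y\<in>UNIV. m y t * (log 2 (\<Sum>t'\<in>UNIV. m y t') - log 2 (m y t)))"

lemma xlogx_0 [simp]: "xlogx 0 = 0"
  by (simp add: xlogx_def)

lemma xlnx_tangent_le:
  fixes a c :: real
  assumes "a > 0" "c \<ge> 0"
  shows "a * ln a + (ln a + 1) * (c - a) \<le> c * ln c"
proof (cases "c = 0")
  case True
  then show ?thesis using assms by (simp add: algebra_simps)
next
  case False
  with assms have "c > 0" by simp
  have "c * ln (a / c) \<le> c * (a / c - 1)"
    using ln_le_minus_one \<open>c > 0\<close> assms(1) by (intro mult_left_mono) simp_all
  then have "c * (ln a - ln c) \<le> a - c"
    using \<open>c > 0\<close> assms(1) by (simp add: ln_div right_diff_distrib)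
  then show ?thesis by (simp add: algebra_simps)
qed

lemma xlogx_tangent_le:
  fixes a c :: real
  assumes "a > 0" "c \<ge> 0"
  shows "xlogx a + (log 2 a + 1 / ln 2) * (c - a) \<le> xlogx c"
proof -
  have "(a * ln a + (ln a + 1) * (c - a)) / ln 2 \<le> c * ln c / ln 2"
    using xlnx_tangent_le[OF assms] by (simp add: divide_right_mono)
  then show ?thesis unfolding xlogx_def log_def by (simp add: field_simps)
qed

lemma xlogx_convex:
  fixes a b e :: real
  assumes "a \<ge> 0" "b \<ge> 0" "0 \<le> e" "e \<le> 1"
  shows "xlogx ((1 - e) * a + e * b) \<le> (1 - e) * xlogx a + e * xlogx b"
proof (cases "(1 - e) * a + e * b = 0")
  case True
  with assms have "(1 - e) * a = 0" "e * b = 0"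
    by (smt (verit) mult_nonneg_nonneg)+
  with True show ?thesis by (auto simp: xlogx_def)
next
  case False
  define c where "c = (1 - e) * a + e * b"
  define d where "d = log 2 c + 1 / ln 2"
  have "c > 0" using False assms unfolding c_def by (smt (verit) mult_nonneg_nonneg)
  have "(1 - e) * (xlogx c + d * (a - c)) + e * (xlogx c + d * (b - c))
      \<le> (1 - e) * xlogx a + e * xlogx b"
    using xlogx_tangent_le[OF \<open>c > 0\<close> assms(1)] xlogx_tangent_le[OF \<open>c > 0\<close> assms(2)] assms
    unfolding d_def by (intro add_mono mult_left_mono) auto
  moreover have "(1 - e) * (xlogx c + d * (a - c)) + e * (xlogx c + d * (b - c)) = xlogx c"
    unfolding c_def by (simp add: algebra_simps)
  ultimately show ?thesis unfolding c_def by simp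
qed

lemma xlogx_mult:
  fixes e u :: real
  assumes "e > 0" "u \<ge> 0"
  shows "xlogx (e * u) = e * u * log 2 e + e * xlogx u"
  using assms unfolding xlogx_def by (cases "u = 0") (auto simp: log_mult algebra_simps)

lemma neg_entropy_scale:
  fixes b :: "'t::finite \<Rightarrow> real"
  assumes "e > 0" "\<forall>t. 0 \<le> b t"
  shows "neg_entropy (\<lambda>t. e * b t) = e * neg_entropy b"
  using assms
  by (simp add: neg_entropy_def xlogx_mult sum_nonneg sum.distrib
      sum_distrib_left[symmetric] sum_distrib_right[symmetric] algebra_simps)

lemma neg_entropy_mix_le_pos:
  fixes a b :: "'t::finite \<Rightarrow> real"
  assumes a: "\<forall>t. 0 \<le> a t" and b: "\<forall>t. 0 \<le> b t" and e: "0 < e" "e < 1"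
    and "sum a UNIV > 0" and S: "\<forall>t\<in>S. a t = 0"
  shows "neg_entropy (\<lambda>t. (1 - e) * a t + e * b t) - neg_entropy a
    \<le> e * neg_entropy_slope a b + e * log 2 e * (\<Sum>t\<in>S. b t)"
proof -
  define A where "A = sum a UNIV"
  define c where "c = (\<lambda>t. (1 - e) * a t + e * b t)"
  define d where "d = log 2 A + 1 / ln 2"
  have pointwise: "xlogx (c t) - xlogx (a t)
      \<le> e * (xlogx (b t) - xlogx (a t)) + (if t \<in> S then e * log 2 e * b t else 0)" for t
  proof (cases "t \<in> S")
    case True
    then show ?thesis using S xlogx_mult[OF e(1), of "b t"] b unfolding c_def by simp
  next
    case False
    then show ?thesis using xlogx_convex[of "a t" "b t" e] a b e unfolding c_def
      by (simp add: algebra_simps)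
  qed
  have "(\<Sum>t\<in>UNIV. xlogx (c t) - xlogx (a t))
      \<le> (\<Sum>t\<in>UNIV. e * (xlogx (b t) - xlogx (a t)) + (if t \<in> S then e * log 2 e * b t else 0))"
    by (intro sum_mono pointwise)
  then have "(\<Sum>t\<in>UNIV. xlogx (c t)) - (\<Sum>t\<in>UNIV. xlogx (a t))
      \<le> e * (\<Sum>t\<in>UNIV. xlogx (b t) - xlogx (a t)) + e * log 2 e * (\<Sum>t\<in>S. b t)"
    by (simp add: sum_subtractf sum.distrib sum.If_cases flip: sum_distrib_left)
  moreover have "sum c UNIV = (1 - e) * A + e * sum b UNIV"
    unfolding c_def A_def by (simp add: sum.distrib sum_distrib_left)
  then have "sum c UNIV - A = e * (sum b UNIV - A)"
    by (simp add: algebra_simps)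
  moreover have "xlogx A + d * (sum c UNIV - A) \<le> xlogx (sum c UNIV)"
    using a b e \<open>sum a UNIV > 0\<close> unfolding A_def c_def d_def
    by (intro xlogx_tangent_le sum_nonneg) auto
  ultimately show ?thesis
    using \<open>sum a UNIV > 0\<close>
    unfolding neg_entropy_def neg_entropy_slope_def A_def[symmetric] d_def[symmetric] c_def[symmetric]
    by (simp add: right_diff_distrib mult.left_commute[of d e])
qed

lemma neg_entropy_mix_le:
  fixes a b :: "'t::finite \<Rightarrow> real"
  assumes a: "\<forall>t. 0 \<le> a t" and b: "\<forall>t. 0 \<le> b t" and e: "0 < e" "e < 1"
  shows "neg_entropy (\<lambda>t. (1 - e) * a t + e * b t) - neg_entropy a \<le> e * neg_entropy_slope a b"
proof (cases "sum a UNIV = 0")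
  case True
  with a have "\<forall>t. a t = 0" by (simp add: sum_nonneg_eq_0_iff)
  then show ?thesis
    using True neg_entropy_scale[OF e(1) b] by (simp add: neg_entropy_slope_def neg_entropy_def)
next
  case False
  with a have "sum a UNIV > 0" by (metis less_eq_real_def sum_nonneg)
  from neg_entropy_mix_le_pos[OF a b e this, of "{}"] show ?thesis by simp
qed

lemma sum_UNIV_triple:
  "(\<Sum>z\<in>UNIV. f z) = (\<Sum>t\<in>UNIV. \<Sum>x\<in>UNIV. \<Sum>y\<in>UNIV. f (t, x, y))"
  for f :: "'a::finite \<times> 'b::finite \<times> 'c::finite \<Rightarrow> 'd::comm_monoid_add"
  by (simp add: sum.cartesian_product flip: UNIV_Times_UNIV)

lemma margY_eq_sum_margYT: "margY Q y = (\<Sum>t\<in>UNIV. margYT Q y t)"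
  unfolding margY_def margYT_def ..

lemma condMI_summand_eq:
  fixes Q :: "'t::finite \<times> 'x::finite \<times> 'y::finite \<Rightarrow> real"
  assumes nonneg: "\<forall>z. 0 \<le> Q z"
  shows "(if Q (t, x, y) = 0 then 0
      else Q (t, x, y) * log 2 ((Q (t, x, y) * margY Q y) / (margYT Q y t * margXY Q x y)))
    = xlogx (Q (t, x, y)) - Q (t, x, y) * log 2 (margXY Q x y)
      + Q (t, x, y) * (log 2 (margY Q y) - log 2 (margYT Q y t))"
proof (cases "Q (t, x, y) = 0")
  case True
  then show ?thesis by simp
next
  case False
  with nonneg have "Q (t, x, y) > 0" by (metis less_eq_real_def)
  have "Q (t, x, y) \<le> margYT Q y t" "Q (t, x, y) \<le> margXY Q x y"
    unfolding margYT_def margXY_def using nonneg by (auto intro: member_le_sum)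
  moreover have "margYT Q y t \<le> margY Q y"
    unfolding margY_eq_sum_margYT margYT_def using nonneg
    by (intro member_le_sum[where f = "\<lambda>t. \<Sum>x\<in>UNIV. Q (t, x, y)"] sum_nonneg) auto
  ultimately show ?thesis
    using \<open>Q (t, x, y) > 0\<close> by (simp add: xlogx_def log_mult log_divide algebra_simps)
qed

lemma condMI_eq_cond_entropy_diff:
  fixes Q :: "'t::finite \<times> 'x::finite \<times> 'y::finite \<Rightarrow> real"
  assumes "\<forall>z. 0 \<le> Q z"
  shows "condMI Q = cond_entropy_marg (margYT Q) + neg_cond_entropy Q"
proof -
  have "condMI Q = (\<Sum>t\<in>UNIV. \<Sum>x\<in>UNIV. \<Sum>y\<in>UNIV. xlogx (Q (t, x, y)))
       - (\<Sum>t\<in>UNIV. \<Sum>x\<in>UNIV. \<Sum>y\<in>UNIV. Q (t, x, y) * log 2 (margXY Q x y))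
       + (\<Sum>t\<in>UNIV. \<Sum>x\<in>UNIV. \<Sum>y\<in>UNIV.
            Q (t, x, y) * (log 2 (margY Q y) - log 2 (margYT Q y t)))"
    unfolding condMI_def sum_UNIV_triple
    by (simp add: condMI_summand_eq[OF assms] sum.distrib sum_subtractf)
  also have "(\<Sum>t\<in>UNIV. \<Sum>x\<in>UNIV. \<Sum>y\<in>UNIV. xlogx (Q (t, x, y)))
      = (\<Sum>x\<in>UNIV. \<Sum>y\<in>UNIV. \<Sum>t\<in>UNIV. xlogx (Q (t, x, y)))"
    by (subst sum.swap) (rule sum.cong[OF refl], rule sum.swap)
  also have "(\<Sum>t\<in>UNIV. \<Sum>x\<in>UNIV. \<Sum>y\<in>UNIV. Q (t, x, y) * log 2 (margXY Q x y))
      = (\<Sum>x\<in>UNIV. \<Sum>y\<in>UNIV. xlogx (margXY Q x y))"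
    unfolding xlogx_def margXY_def sum_distrib_right
    by (subst sum.swap) (rule sum.cong[OF refl], rule sum.swap)
  also have "(\<Sum>t\<in>UNIV. \<Sum>x\<in>UNIV. \<Sum>y\<in>UNIV.
            Q (t, x, y) * (log 2 (margY Q y) - log 2 (margYT Q y t)))
      = cond_entropy_marg (margYT Q)"
    unfolding cond_entropy_marg_def margY_eq_sum_margYT[symmetric]
    unfolding margYT_def sum_distrib_right
    by (rule sum.cong[OF refl], rule sum.swap)
  finally show ?thesis
    unfolding neg_cond_entropy_def neg_entropy_def margXY_def by (simp add: sum_subtractf)
qed

lemma DeltaP_nonneg: "Q \<in> DeltaP P \<Longrightarrow> \<forall>z. 0 \<le> Q z"
  by (simp add: DeltaP_def distr_def)

lemma condMI_DeltaP_eq: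
  assumes "Q \<in> DeltaP P"
  shows "condMI Q = cond_entropy_marg (margYT P) + neg_cond_entropy Q"
proof -
  have "margYT Q = margYT P"
    using assms by (simp add: DeltaP_def fun_eq_iff)
  then show ?thesis
    using condMI_eq_cond_entropy_diff DeltaP_nonneg[OF assms] by metis
qed

lemma convex_comb_in_DeltaP:
  assumes "Q1 \<in> DeltaP P" "Q2 \<in> DeltaP P" "0 \<le> e" "e \<le> 1"
  shows "(\<lambda>z. (1 - e) * Q1 z + e * Q2 z) \<in> DeltaP P"
proof -
  let ?Q = "\<lambda>z. (1 - e) * Q1 z + e * Q2 z"
  have "margXT ?Q x t = (1 - e) * margXT Q1 x t + e * margXT Q2 x t"
    and "margYT ?Q y t = (1 - e) * margYT Q1 y t + e * margYT Q2 y t"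
    and "(\<Sum>z\<in>UNIV. ?Q z) = (1 - e) * (\<Sum>z\<in>UNIV. Q1 z) + e * (\<Sum>z\<in>UNIV. Q2 z)" for x y t
    unfolding margXT_def margYT_def by (simp_all add: sum.distrib sum_distrib_left)
  moreover have "0 \<le> ?Q z" for z
    using DeltaP_nonneg[OF assms(1), rule_format, of z] DeltaP_nonneg[OF assms(2), rule_format, of z]
      assms(3,4)
    by simp
  ultimately show ?thesis
    using assms by (simp add: DeltaP_def distr_def algebra_simps)
qed

lemma neg_cond_entropy_mix_le:
  fixes Q Q' :: "'t::finite \<times> 'x::finite \<times> 'y::finite \<Rightarrow> real"
  assumes Q: "\<forall>z. 0 \<le> Q z" and Q': "\<forall>z. 0 \<le> Q' z" and e: "0 < e" "e < 1"
    and "Q (t, x, y) = 0" and "margXY Q x y > 0"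
  shows "neg_cond_entropy (\<lambda>z. (1 - e) * Q z + e * Q' z) - neg_cond_entropy Q
    \<le> e * (\<Sum>x'\<in>UNIV. \<Sum>y'\<in>UNIV. neg_entropy_slope (\<lambda>t. Q (t, x', y')) (\<lambda>t. Q' (t, x', y')))
      + e * log 2 e * Q' (t, x, y)"
proof -
  define a where "a = (\<lambda>x' y' t. Q (t, x', y'))"
  define b where "b = (\<lambda>x' y' t. Q' (t, x', y'))"
  have block: "neg_entropy (\<lambda>t. (1 - e) * a x' y' t + e * b x' y' t) - neg_entropy (a x' y')
      \<le> e * neg_entropy_slope (a x' y') (b x' y')
        + (if y' = y then if x' = x then e * log 2 e * Q' (t, x, y) else 0 else 0)" for x' y'
  proof (cases "x' = x \<and> y' = y")
    case True
    have "sum (a x y) UNIV > 0"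
      using \<open>margXY Q x y > 0\<close> unfolding a_def margXY_def by simp
    with True show ?thesis
      using neg_entropy_mix_le_pos[of "a x y" "b x y" e "{t}"] Q Q' e \<open>Q (t, x, y) = 0\<close>
      unfolding a_def b_def by simp
  next
    case False
    then show ?thesis
      using neg_entropy_mix_le[of "a x' y'" "b x' y'" e] Q Q' e unfolding a_def b_def by auto
  qed
  have "neg_cond_entropy (\<lambda>z. (1 - e) * Q z + e * Q' z) - neg_cond_entropy Q
      = (\<Sum>x'\<in>UNIV. \<Sum>y'\<in>UNIV. neg_entropy (\<lambda>t. (1 - e) * a x' y' t + e * b x' y' t)
          - neg_entropy (a x' y'))"
    unfolding neg_cond_entropy_def a_def b_def by (simp add: sum_subtractf)
  also have "\<dots> \<le> (\<Sum>x'\<in>UNIV. \<Sum>y'\<in>UNIV. e * neg_entropy_slope (a x' y') (b x' y')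
        + (if y' = y then if x' = x then e * log 2 e * Q' (t, x, y) else 0 else 0))"
    by (intro sum_mono block)
  finally show ?thesis
    unfolding a_def b_def by (simp add: sum.distrib flip: sum_distrib_left)
qed

lemma neg_cond_entropy_mix_less:
  fixes Q Q' :: "'t::finite \<times> 'x::finite \<times> 'y::finite \<Rightarrow> real"
  assumes "\<forall>z. 0 \<le> Q z" "\<forall>z. 0 \<le> Q' z"
    and "Q (t, x, y) = 0" "Q' (t, x, y) > 0" "margXY Q x y > 0"
  obtains e where "0 < e" "e < 1"
    "neg_cond_entropy (\<lambda>z. (1 - e) * Q z + e * Q' z) < neg_cond_entropy Q"
proof
  define K where "K = (\<Sum>x'\<in>UNIV. \<Sum>y'\<in>UNIV.
    neg_entropy_slope (\<lambda>t. Q (t, x', y')) (\<lambda>t. Q' (t, x', y')))"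
  define e :: real where "e = 2 powr (- (\<bar>K\<bar> + 1) / Q' (t, x, y))"
  show "0 < e" unfolding e_def by simp
  show "e < 1" unfolding e_def using \<open>Q' (t, x, y) > 0\<close>
    by (intro powr_less_one) (auto simp: divide_neg_pos)
  have "log 2 e * Q' (t, x, y) = - (\<bar>K\<bar> + 1)"
    unfolding e_def using \<open>Q' (t, x, y) > 0\<close> by simp
  then have "e * K + e * log 2 e * Q' (t, x, y) < 0"
    using \<open>0 < e\<close> by (simp add: mult.assoc mult_pos_neg flip: distrib_left)
  with neg_cond_entropy_mix_le[OF assms(1,2) \<open>0 < e\<close> \<open>e < 1\<close> assms(3,5)]
  show "neg_cond_entropy (\<lambda>z. (1 - e) * Q z + e * Q' z) < neg_cond_entropy Q"
    unfolding K_def by linarith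
qed

theorem mainTheorem5:
  fixes P Qs :: "'t::finite \<times> 'x::finite \<times> 'y::finite \<Rightarrow> real"
    and t :: 't and x :: 'x and y :: 'y
  assumes "P \<in> distr"
    and "Qs \<in> DeltaP P"
    and "\<forall>Q\<in>DeltaP P. condMI Qs \<le> condMI Q"
    and "(t, x, y) \<in> suppDeltaP P"
    and "Qs (t, x, y) = 0"
  shows "margXY Qs x y = 0 \<and> (\<forall>t'. Qs (t', x, y) = 0)"
proof -
  obtain Q' where Q': "Q' \<in> DeltaP P" "Q' (t, x, y) \<noteq> 0"
    using assms(4) unfolding suppDeltaP_def by auto
  note nonneg = DeltaP_nonneg[OF assms(2)] DeltaP_nonneg[OF Q'(1)]
  have "margXY Qs x y = 0"
  proof (rule ccontr)
    assume "margXY Qs x y \<noteq> 0"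
    then have "margXY Qs x y > 0"
      using nonneg unfolding margXY_def by (metis less_eq_real_def sum_nonneg)
    moreover have "Q' (t, x, y) > 0"
      using nonneg Q'(2) by (metis less_eq_real_def)
    ultimately obtain e where e: "0 < e" "e < 1"
      and "neg_cond_entropy (\<lambda>z. (1 - e) * Qs z + e * Q' z) < neg_cond_entropy Qs"
      using neg_cond_entropy_mix_less nonneg assms(5) by blast
    moreover have mix: "(\<lambda>z. (1 - e) * Qs z + e * Q' z) \<in> DeltaP P"
      using convex_comb_in_DeltaP[OF assms(2) Q'(1)] e by simp
    ultimately have "condMI (\<lambda>z. (1 - e) * Qs z + e * Q' z) < condMI Qs"
      using condMI_DeltaP_eq[OF mix] condMI_DeltaP_eq[OF assms(2)] by simp
    with assms(3) mix show False by force
  qed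
  with nonneg show ?thesis
    unfolding margXY_def by (simp add: sum_nonneg_eq_0_iff)
qed

end
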